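(* Let $f: \mathbb{R}^n \to \mathbb{R}^n$ be topical and $\lambda \in \mathbb{R}$. Let $i = i_1 \to i_2 \to \cdots \to i_k = j$ be a directed path in $\mathcal{G}(f)$. Then for all $x \in \mathbb{R}^n$, if $f(x) \le \lambda + x$ and $x \ge 0$, then $$x_j \le h^\lambda_{i_k i_{k-1}} \circ \cdots \circ h^\lambda_{i_2 i_1}(x_i).$$
   Context: $f$ is topical if $f(x+h) = f(x)+h$ for all $h\in\mathbb{R}$ (scalar added to each coordinate) and $x\le y$ componentwise implies $f(x)\le f(y)$. $e_{\{j\}}$ is the $j$-th standard basis vector. $\mathcal{G}(f)$ is the directed graph on $\{1,\dots,n\}$ with an edge $i\to j$ iff $\lim_{u\to\infty} f_i(u e_{\{j\}}) = \infty$. For each edge $i\to j$ define $h_{ji}: \mathbb{R}\cup\{-\infty\} \to \mathbb{R}\cup\{-\infty\}$ by $h_{ji}(x) = \sup\{u \in \mathbb{R} : f_i(u e_{\{j\}}) \le x\}$ (with $\sup\emptyset = -\infty$; it is $<\infty$ because of the edge), and $h^\lambda_{ji}(x) = h_{ji}(\lambda + x)$. *)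

theory Defs
  imports "HOL-Analysis.Analysis" "HOL-Library.Extended_Real"
begin

definition topical :: "(real^'n \<Rightarrow> real^'n) \<Rightarrow> bool" where
  "topical f \<longleftrightarrow>
     (\<forall>x h. f (x + (\<chi> k. h)) = f x + (\<chi> k. h)) \<and>
     (\<forall>x y. (\<forall>k. x $ k \<le> y $ k) \<longrightarrow> (\<forall>k. f x $ k \<le> f y $ k))"

definition graph_edge :: "(real^'n \<Rightarrow> real^'n) \<Rightarrow> 'n \<Rightarrow> 'n \<Rightarrow> bool" where
  "graph_edge f i j \<longleftrightarrow> filterlim (\<lambda>u. f (axis j u) $ i) at_top at_top"

text \<open>h_{ji}(x) = sup {u. f_i(u e_j) \<le> x}, on R \<union> {-\<infinity>}, via ereal (Sup {} = -\<infinity>).\<close>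
definition hfun :: "(real^'n \<Rightarrow> real^'n) \<Rightarrow> 'n \<Rightarrow> 'n \<Rightarrow> ereal \<Rightarrow> ereal" where
  "hfun f j i x = Sup {ereal u | u. ereal (f (axis j u) $ i) \<le> x}"

definition hlam :: "(real^'n \<Rightarrow> real^'n) \<Rightarrow> real \<Rightarrow> 'n \<Rightarrow> 'n \<Rightarrow> ereal \<Rightarrow> ereal" where
  "hlam f lam j i x = hfun f j i (ereal lam + x)"

definition is_path :: "(real^'n \<Rightarrow> real^'n) \<Rightarrow> 'n list \<Rightarrow> bool" where
  "is_path f p \<longleftrightarrow> p \<noteq> [] \<and> (\<forall>m. Suc m < length p \<longrightarrow> graph_edge f (p ! m) (p ! Suc m))"

text \<open>path_comp f lam [i_1,...,i_k] = h^lam_{i_k i_{k-1}} o ... o h^lam_{i_2 i_1}.\<close>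
fun path_comp :: "(real^'n \<Rightarrow> real^'n) \<Rightarrow> real \<Rightarrow> 'n list \<Rightarrow> ereal \<Rightarrow> ereal" where
  "path_comp f lam (a # b # rest) x = path_comp f lam (b # rest) (hlam f lam b a x)"
| "path_comp f lam _ x = x"

end

theory Submission
  imports Defs
begin

text \<open>If \<open>x \<ge> 0\<close> then \<open>x\<^sub>b e\<^sub>b \<le> x\<close>, so monotonicity of \<open>f\<close> and \<open>f(x) \<le> \<lambda> + x\<close> give
  \<open>f\<^sub>a(x\<^sub>b e\<^sub>b) \<le> \<lambda> + x\<^sub>a\<close>: the value \<open>x\<^sub>b\<close> is among those whose supremum defines
  \<open>h\<^sup>\<lambda>\<^sub>b\<^sub>a(x\<^sub>a)\<close>, hence \<open>x\<^sub>b \<le> h\<^sup>\<lambda>\<^sub>b\<^sub>a(y)\<close> for every \<open>y \<ge> x\<^sub>a\<close>. Iterating this along the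
  path proves the claim.\<close>

lemma topical_monoD:
  assumes "topical f" and "\<forall>k. x $ k \<le> y $ k"
  shows "f x $ k \<le> f y $ k"
  using assms unfolding topical_def by blast

lemma axis_component_le:
  fixes x :: "'a::{order,zero} ^ 'n"
  assumes "\<forall>k. 0 \<le> x $ k"
  shows "axis b (x $ b) $ k \<le> x $ k"
  using assms by (simp add: axis_def)

lemma le_hfun:
  assumes "ereal (f (axis j u) $ i) \<le> y"
  shows "ereal u \<le> hfun f j i y"
  unfolding hfun_def using assms by (blast intro: Sup_upper)

lemma subeigen_le_hlam:
  assumes "topical f" and "\<forall>k. f x $ k \<le> lam + x $ k" and "\<forall>k. 0 \<le> x $ k"
    and "ereal (x $ a) \<le> y"
  shows "ereal (x $ b) \<le> hlam f lam b a y"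
proof -
  have "f (axis b (x $ b)) $ a \<le> f x $ a"
    using assms(1,3) by (blast intro: topical_monoD axis_component_le)
  also have "\<dots> \<le> lam + x $ a"
    using assms(2) by blast
  finally have "ereal (f (axis b (x $ b)) $ a) \<le> ereal lam + ereal (x $ a)"
    by simp
  also have "\<dots> \<le> ereal lam + y"
    using assms(4) by (rule add_left_mono)
  finally show ?thesis
    unfolding hlam_def by (rule le_hfun)
qed

lemma subeigen_le_path_comp:
  assumes "topical f" and "\<forall>k. f x $ k \<le> lam + x $ k" and "\<forall>k. 0 \<le> x $ k"
    and "ereal (x $ a) \<le> y"
  shows "ereal (x $ last (a # rest)) \<le> path_comp f lam (a # rest) y"
  using assms(4)
proof (induction rest arbitrary: a y)
  case Nil
  then show ?case by simp
next
  case (Cons b rest)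
  have "ereal (x $ b) \<le> hlam f lam b a y"
    using assms(1-3) Cons.prems by (rule subeigen_le_hlam)
  then show ?case
    using Cons.IH by simp
qed

theorem lemma3p2:
  fixes f :: "real^'n \<Rightarrow> real^'n" and lam :: real and p :: "'n list" and x :: "real^'n"
  assumes "topical f"
    and "is_path f p" and "hd p = i" and "last p = j"
    and "\<forall>k. f x $ k \<le> lam + x $ k"
    and "\<forall>k. 0 \<le> x $ k"
  shows "ereal (x $ j) \<le> path_comp f lam p (ereal (x $ i))"
proof -
  obtain rest where p: "p = i # rest"
    using assms(2,3) unfolding is_path_def by (cases p) auto
  have "ereal (x $ last (i # rest)) \<le> path_comp f lam (i # rest) (ereal (x $ i))"
    using assms(1,5,6) by (rule subeigen_le_path_comp) simp
  then show ?thesis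
    using p assms(4) by simp
qed

end
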